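(* Let $\Gamma\triangleright W$ be a well-formed CCCP configuration, $c$ a channel and $v$ a closed value, and let $\mathit{eureka},\mathit{fail}$ be channels that do not occur free in $W$ and are idle in $\Gamma$; let $\mathit{arb},\mathit{no}$ be closed values with $\delta_{\mathit{arb}}=\delta_{\mathit{no}}=1$, and let $d$ be a channel distinct from $c,\mathit{eureka},\mathit{fail}$. Define $T_{\gamma(c,v)}=\nu d{:}(0,\cdot).\big(\lfloor ?c(x).(([x=v]\,d!\langle\mathit{arb}\rangle.\mathbf 0,\ \mathbf 0)+\mathit{fail}!\langle\mathit{no}\rangle.\mathbf 0)\rfloor\ \big|\ \sigma^2.([\mathrm{exp}(d)]\,\mathit{eureka}!\langle\mathit{arb}\rangle.\mathbf 0,\ \mathbf 0)\big)$ and $T^{\checkmark}_{\gamma(c,v)}=\nu d{:}(0,\cdot).\big(\sigma.d!\langle\mathit{arb}\rangle.\mathbf 0\ \big|\ \sigma.([\mathrm{exp}(d)]\,\mathit{eureka}!\langle\mathit{arb}\rangle.\mathbf 0,\ \mathbf 0)\big)$, where $\nu d{:}(0,\cdot)$ means $d$ is restricted with exposure time $0$ (idle; the value component is irrelevant). Then $\Gamma\triangleright W\overset{\gamma(c,v)}{\Rightarrow}\Gamma'\triangleright W'$ if and only if $\Gamma\triangleright W|T_{\gamma(c,v)}\to_i^*\to_\sigma\to_i^*\Gamma'\triangleright W'|T^{\checkmark}_{\gamma(c,v)}$.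
   Context: CCCP syntax. Fix a set of channels (ranged over by $c,d$) and a set of values containing data variables $x,y$ and a special error value $\mathtt{err}$; closed values $v,w$ contain no variables, and each closed value $v$ has a transmission time $\delta_v\in\mathbb{N}$ with $\delta_v\ge 1$. Expressions $e$ are built from values; closed expressions evaluate to closed values via $[\![e]\!]$. Station code (processes) is given by $P,Q ::= c!\langle e\rangle.P \mid \lfloor ?c(x).P\rfloor Q \mid \sigma.P \mid \tau.P \mid P+Q \mid [b]P,Q \mid X \mid \mathbf{0} \mid \mathrm{fix}\,X.P$, where $b$ is either $e_1=e_2$ or $\mathrm{exp}(c)$, $[b]P,Q$ is a conditional (then-branch $P$, else-branch $Q$), $\lfloor ?c(x).P\rfloor Q$ is a receiver on $c$ with timeout branch $Q$ ($x$ bound in $P$), $\sigma.P$ is a one-unit delay and $\sigma^n.P$ denotes $n$ nested delays. System terms are $W ::= P \mid \lfloor ?c(x).P\rfloor \mid W_1|W_2 \mid \nu c{:}(n,v).W$, where $\lfloor ?c(x).P\rfloor$ is an active receiver ($x$ bound in $P$) and $\nu c{:}(n,v).W$ restricts $c$ with local channel state $(n,v)$. In $\mathrm{fix}\,X.P$ every occurrence of $X$ in $P$ is guarded, i.e. lies within a broadcast prefix, a receiver continuation, a timeout branch, a $\sigma$-prefix, or a branch of a conditional. Terms are identified up to $\alpha$-conversion. A channel environment is a map $\Gamma$ from channels to $\mathbb{N}\times$(closed values); write $\Gamma\vdash_t c:n$ and $\Gamma\vdash_v c:w$ when $\Gamma(c)=(n,w)$; $c$ is idle in $\Gamma$ if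 $\Gamma\vdash_t c:0$ and exposed otherwise; $\Gamma[c\mapsto(n,v)]$ is $\Gamma$ updated at $c$; $\Gamma\le\Gamma'$ iff for every $c$, $\Gamma\vdash_t c:n$ and $\Gamma'\vdash_t c:m$ imply $n\le m$. A configuration $\Gamma\triangleright W$ is a channel environment together with a closed system term (no free data or process variables). Intensional semantics. Actions $\lambda$ are $c!v$, $c?v$, $\sigma$, $\tau$. The environment update $\lambda(\Gamma)$ is: $\sigma(\Gamma)(c)=(\max(n-1,0),w)$ whenever $\Gamma(c)=(n,w)$; $c!v(\Gamma)$ agrees with $\Gamma$ except at $c$, where it is $(\delta_v,v)$ if $c$ is idle in $\Gamma$ and $(\max(\delta_v,n),\mathtt{err})$ if $\Gamma\vdash_t c:n>0$; $c?v(\Gamma)=c!v(\Gamma)$; $\tau(\Gamma)=\Gamma$. The predicate $\mathrm{rcv}(W,c)$ on terms is: true for $\lfloor ?d(x).P\rfloor Q$ iff $d=c$; $\mathrm{rcv}(P+Q,c)=\mathrm{rcv}(P,c)\vee\mathrm{rcv}(Q,c)$; $\mathrm{rcv}(\mathrm{fix}\,X.P,c)=\mathrm{rcv}(P,c)$; $\mathrm{rcv}(W_1|W_2,c)=\mathrm{rcv}(W_1,c)\vee\mathrm{rcv}(W_2,c)$; $\mathrm{rcv}(\nu d{:}(n,v).W,c)=\mathrm{rcv}(W,c)$ (with $d\neq c$ by $\alpha$-conversion); false for all other forms (broadcasts, $\tau.P$, $\sigma.P$, conditionals, $X$, $\mathbf 0$, active receivers). Then $\mathrm{rcv}(\Gamma\triangleright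 W,c)$ holds iff $c$ is idle in $\Gamma$ and $\mathrm{rcv}(W,c)$. Transitions $\Gamma\triangleright W\xrightarrow{\lambda}W'$ are the least relation closed under: (Snd) $[\![e]\!]=v$ implies $\Gamma\triangleright c!\langle e\rangle.P\xrightarrow{c!v}\sigma^{\delta_v}.P$; (Rcv) $c$ idle in $\Gamma$ implies $\Gamma\triangleright\lfloor ?c(x).P\rfloor Q\xrightarrow{c?v}\lfloor ?c(x).P\rfloor$; (RcvIgn) $\neg\mathrm{rcv}(\Gamma\triangleright W,c)$ implies $\Gamma\triangleright W\xrightarrow{c?v}W$; (Sync) $\Gamma\triangleright W_1\xrightarrow{c!v}W_1'$ and $\Gamma\triangleright W_2\xrightarrow{c?v}W_2'$ imply $\Gamma\triangleright W_1|W_2\xrightarrow{c!v}W_1'|W_2'$, and symmetrically; (RcvPar) $\Gamma\triangleright W_i\xrightarrow{c?v}W_i'$ for $i=1,2$ imply $\Gamma\triangleright W_1|W_2\xrightarrow{c?v}W_1'|W_2'$; (TimeNil) $\Gamma\triangleright\mathbf 0\xrightarrow{\sigma}\mathbf 0$; (Sleep) $\Gamma\triangleright\sigma.P\xrightarrow{\sigma}P$; (ActRcv) $\Gamma\vdash_t c:n$, $n>1$ imply $\Gamma\triangleright\lfloor ?c(x).P\rfloor\xrightarrow{\sigma}\lfloor ?c(x).P\rfloor$; (EndRcv) $\Gamma\vdash_t c:1$, $\Gamma\vdash_v c:w$ imply $\Gamma\triangleright\lfloor ?c(x).P\rfloor\xrightarrow{\sigma}\{w/x\}P$; (Timeout)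 $c$ idle in $\Gamma$ implies $\Gamma\triangleright\lfloor ?c(x).P\rfloor Q\xrightarrow{\sigma}Q$; (RcvLate) $c$ exposed in $\Gamma$ implies $\Gamma\triangleright\lfloor ?c(x).P\rfloor Q\xrightarrow{\tau}\lfloor ?c(x).\{\mathtt{err}/x\}P\rfloor$; (Tau) $\Gamma\triangleright\tau.P\xrightarrow{\tau}P$; (Then)/(Else) $\Gamma\triangleright[b]P,Q\xrightarrow{\tau}\sigma.P$ if $[\![b]\!]_\Gamma$ is true and $\xrightarrow{\tau}\sigma.Q$ otherwise, where $[\![e_1=e_2]\!]_\Gamma$ is true iff $[\![e_1]\!]=[\![e_2]\!]$ and $[\![\mathrm{exp}(c)]\!]_\Gamma$ is true iff $c$ is exposed in $\Gamma$; (TimePar) $\Gamma\triangleright W_i\xrightarrow{\sigma}W_i'$ for $i=1,2$ imply $\Gamma\triangleright W_1|W_2\xrightarrow{\sigma}W_1'|W_2'$; (TauPar) $\Gamma\triangleright W_1\xrightarrow{\tau}W_1'$ implies $\Gamma\triangleright W_1|W_2\xrightarrow{\tau}W_1'|W_2$, and symmetrically; (Rec) $\Gamma\triangleright\{\mathrm{fix}\,X.P/X\}P\xrightarrow{\lambda}W$ implies $\Gamma\triangleright\mathrm{fix}\,X.P\xrightarrow{\lambda}W$; (Sum) for $\lambda\in\{\tau,c!v\}$, $\Gamma\triangleright P\xrightarrow{\lambda}W$ implies $\Gamma\triangleright P+Q\xrightarrow{\lambda}W$, and symmetrically; (SumTime) $\Gamma\triangleright P\xrightarrow{\sigma}P'$,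 $\Gamma\triangleright Q\xrightarrow{\sigma}Q'$ imply $\Gamma\triangleright P+Q\xrightarrow{\sigma}P'+Q'$; (SumRcv) $\Gamma\triangleright P\xrightarrow{c?v}W$ and $\mathrm{rcv}(\Gamma\triangleright P,c)$ imply $\Gamma\triangleright P+Q\xrightarrow{c?v}W$, and symmetrically; (ResI) $\Gamma[c\mapsto(n,v)]\triangleright W\xrightarrow{c!w}W'$ implies $\Gamma\triangleright\nu c{:}(n,v).W\xrightarrow{\tau}\nu c{:}(c!w(\Gamma[c\mapsto(n,v)]))(c).W'$; (ResV) $\Gamma[c\mapsto(n,v)]\triangleright W\xrightarrow{\lambda}W'$ with $c$ not occurring in $\lambda$ implies $\Gamma\triangleright\nu c{:}(n,v).W\xrightarrow{\lambda}\nu c{:}(\lambda(\Gamma[c\mapsto(n,v)]))(c).W'$. Reductions. $\Gamma\triangleright W\to\Gamma'\triangleright W'$ iff $\Gamma\triangleright W\xrightarrow{\lambda}W'$ for some $\lambda\in\{c!v,\sigma,\tau\}$ and $\Gamma'=\lambda(\Gamma)$; it is instantaneous ($\to_i$) if $\lambda\neq\sigma$ and timed ($\to_\sigma$) if $\lambda=\sigma$. Extensional semantics. Extensional actions $\alpha\in\{c?v,\sigma,\tau,\gamma(c,v),\iota(c)\}$ between configurations are given by: (Input) $\Gamma\triangleright W\xrightarrow{c?v}W'$ implies $\Gamma\triangleright W\overset{c?v}{\rightarrowtail}c?v(\Gamma)\triangleright W'$; (Time) $\Gamma\triangleright W\xrightarrow{\sigma}W'$ implies $\Gamma\triangleright W\overset{\sigma}{\rightarrowtail}\sigma(\Gamma)\triangleright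 W'$; (Shh) $\Gamma\triangleright W\xrightarrow{c!v}W'$ implies $\Gamma\triangleright W\overset{\tau}{\rightarrowtail}c!v(\Gamma)\triangleright W'$; (TauExt) $\Gamma\triangleright W\xrightarrow{\tau}W'$ implies $\Gamma\triangleright W\overset{\tau}{\rightarrowtail}\Gamma\triangleright W'$; (Deliver) $\Gamma(c)=(1,v)$ and $\Gamma\triangleright W\xrightarrow{\sigma}W'$ imply $\Gamma\triangleright W\overset{\gamma(c,v)}{\rightarrowtail}\sigma(\Gamma)\triangleright W'$; (Idle) $c$ idle in $\Gamma$ implies $\Gamma\triangleright W\overset{\iota(c)}{\rightarrowtail}\Gamma\triangleright W$. Weak actions: $\Rightarrow$ is the reflexive-transitive closure of $\overset{\tau}{\rightarrowtail}$; $\overset{\alpha}{\Rightarrow}$ is $\Rightarrow\overset{\alpha}{\rightarrowtail}\Rightarrow$. Well-formedness. The set of well-formed configurations is the least set such that: $\Gamma\triangleright P$ is well-formed for every closed process $P$; $\Gamma\triangleright\lfloor ?c(x).P\rfloor$ is well-formed whenever $c$ is exposed in $\Gamma$; $\Gamma\triangleright W_1|W_2$ is well-formed whenever $\Gamma\triangleright W_1$ and $\Gamma\triangleright W_2$ are; $\Gamma\triangleright\nu c{:}(n,v).W$ is well-formed whenever $\Gamma[c\mapsto(n,v)]\triangleright W$ is. *)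

theory Defs
  imports Main "HOL-Library.Infinite_Typeclass"
begin

section \<open>CCCP syntax\<close>

text \<open>Closed values have type 'a; data variables and process variables are natural numbers;
  expressions are first-order terms over values, data variables and operator symbols 'f,
  interpreted by a function I.\<close>

datatype ('a,'f) exp = EVal 'a | EVar nat | EApp 'f "('a,'f) exp list"

datatype ('ch,'a,'f) bexp = BEq "('a,'f) exp" "('a,'f) exp" | BExp 'ch

datatype ('ch,'a,'f) proc =
    PSnd 'ch "('a,'f) exp" "('ch,'a,'f) proc"
  | PRcv 'ch nat "('ch,'a,'f) proc" "('ch,'a,'f) proc"            (* |_?c(x).P_| Q *)
  | PSig "('ch,'a,'f) proc"
  | PTau "('ch,'a,'f) proc"
  | PSum "('ch,'a,'f) proc" "('ch,'a,'f) proc"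
  | PCond "('ch,'a,'f) bexp" "('ch,'a,'f) proc" "('ch,'a,'f) proc" (* [b]P,Q *)
  | PVar nat
  | PNil
  | PFix nat "('ch,'a,'f) proc"

datatype ('ch,'a,'f) sys =
    SProc "('ch,'a,'f) proc"
  | SRcv 'ch nat "('ch,'a,'f) proc"                                (* active receiver *)
  | SPar "('ch,'a,'f) sys" "('ch,'a,'f) sys"
  | SNu 'ch "nat \<times> 'a" "('ch,'a,'f) sys"                        (* nu c:(n,v).W *)

abbreviation sigmas :: "nat \<Rightarrow> ('ch,'a,'f) proc \<Rightarrow> ('ch,'a,'f) proc" where
  "sigmas n P \<equiv> (PSig ^^ n) P"

primrec fv_e :: "('a,'f) exp \<Rightarrow> nat set" where
  "fv_e (EVal v) = {}"
| "fv_e (EVar x) = {x}"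
| "fv_e (EApp f es) = \<Union> (set (map fv_e es))"

fun fv_b :: "('ch,'a,'f) bexp \<Rightarrow> nat set" where
  "fv_b (BEq e1 e2) = fv_e e1 \<union> fv_e e2"
| "fv_b (BExp c) = {}"

primrec fdv_p :: "('ch,'a,'f) proc \<Rightarrow> nat set" where
  "fdv_p (PSnd c e P) = fv_e e \<union> fdv_p P"
| "fdv_p (PRcv c x P Q) = (fdv_p P - {x}) \<union> fdv_p Q"
| "fdv_p (PSig P) = fdv_p P"
| "fdv_p (PTau P) = fdv_p P"
| "fdv_p (PSum P Q) = fdv_p P \<union> fdv_p Q"
| "fdv_p (PCond b P Q) = fv_b b \<union> fdv_p P \<union> fdv_p Q"
| "fdv_p (PVar X) = {}"
| "fdv_p PNil = {}"
| "fdv_p (PFix X P) = fdv_p P"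

primrec fpv_p :: "('ch,'a,'f) proc \<Rightarrow> nat set" where
  "fpv_p (PSnd c e P) = fpv_p P"
| "fpv_p (PRcv c x P Q) = fpv_p P \<union> fpv_p Q"
| "fpv_p (PSig P) = fpv_p P"
| "fpv_p (PTau P) = fpv_p P"
| "fpv_p (PSum P Q) = fpv_p P \<union> fpv_p Q"
| "fpv_p (PCond b P Q) = fpv_p P \<union> fpv_p Q"
| "fpv_p (PVar X) = {X}"
| "fpv_p PNil = {}"
| "fpv_p (PFix X P) = fpv_p P - {X}"

primrec fdv_s :: "('ch,'a,'f) sys \<Rightarrow> nat set" where
  "fdv_s (SProc P) = fdv_p P"
| "fdv_s (SRcv c x P) = fdv_p P - {x}"
| "fdv_s (SPar W1 W2) = fdv_s W1 \<union> fdv_s W2"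
| "fdv_s (SNu c s W) = fdv_s W"

primrec fpv_s :: "('ch,'a,'f) sys \<Rightarrow> nat set" where
  "fpv_s (SProc P) = fpv_p P"
| "fpv_s (SRcv c x P) = fpv_p P"
| "fpv_s (SPar W1 W2) = fpv_s W1 \<union> fpv_s W2"
| "fpv_s (SNu c s W) = fpv_s W"

definition closed_sys :: "('ch,'a,'f) sys \<Rightarrow> bool" where
  "closed_sys W \<longleftrightarrow> fdv_s W = {} \<and> fpv_s W = {}"

primrec guarded :: "nat \<Rightarrow> ('ch,'a,'f) proc \<Rightarrow> bool" where
  "guarded X (PSnd c e P) = True"
| "guarded X (PRcv c x P Q) = True"
| "guarded X (PSig P) = True"
| "guarded X (PTau P) = guarded X P"
| "guarded X (PSum P Q) = (guarded X P \<and> guarded X Q)"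
| "guarded X (PCond b P Q) = True"
| "guarded X (PVar Y) = (Y \<noteq> X)"
| "guarded X PNil = True"
| "guarded X (PFix Y P) = (Y = X \<or> guarded X P)"

primrec guarded_p :: "('ch,'a,'f) proc \<Rightarrow> bool" where
  "guarded_p (PSnd c e P) = guarded_p P"
| "guarded_p (PRcv c x P Q) = (guarded_p P \<and> guarded_p Q)"
| "guarded_p (PSig P) = guarded_p P"
| "guarded_p (PTau P) = guarded_p P"
| "guarded_p (PSum P Q) = (guarded_p P \<and> guarded_p Q)"
| "guarded_p (PCond b P Q) = (guarded_p P \<and> guarded_p Q)"
| "guarded_p (PVar X) = True"
| "guarded_p PNil = True"
| "guarded_p (PFix X P) = (guarded X P \<and> guarded_p P)"

primrec guarded_s :: "('ch,'a,'f) sys \<Rightarrow> bool" where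
  "guarded_s (SProc P) = guarded_p P"
| "guarded_s (SRcv c x P) = guarded_p P"
| "guarded_s (SPar W1 W2) = (guarded_s W1 \<and> guarded_s W2)"
| "guarded_s (SNu c s W) = guarded_s W"

section \<open>Channels: free channels, renaming, alpha-equivalence\<close>

fun chans_b :: "('ch,'a,'f) bexp \<Rightarrow> 'ch set" where
  "chans_b (BEq e1 e2) = {}"
| "chans_b (BExp c) = {c}"

primrec chans_p :: "('ch,'a,'f) proc \<Rightarrow> 'ch set" where
  "chans_p (PSnd c e P) = insert c (chans_p P)"
| "chans_p (PRcv c x P Q) = insert c (chans_p P \<union> chans_p Q)"
| "chans_p (PSig P) = chans_p P"
| "chans_p (PTau P) = chans_p P"
| "chans_p (PSum P Q) = chans_p P \<union> chans_p Q"
| "chans_p (PCond b P Q) = chans_b b \<union> chans_p P \<union> chans_p Q"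
| "chans_p (PVar X) = {}"
| "chans_p PNil = {}"
| "chans_p (PFix X P) = chans_p P"

text \<open>free channels of a system term (processes have no channel binders)\<close>
primrec fc :: "('ch,'a,'f) sys \<Rightarrow> 'ch set" where
  "fc (SProc P) = chans_p P"
| "fc (SRcv c x P) = insert c (chans_p P)"
| "fc (SPar W1 W2) = fc W1 \<union> fc W2"
| "fc (SNu c s W) = fc W - {c}"

fun ren_b :: "('ch \<Rightarrow> 'ch) \<Rightarrow> ('ch,'a,'f) bexp \<Rightarrow> ('ch,'a,'f) bexp" where
  "ren_b f (BEq e1 e2) = BEq e1 e2"
| "ren_b f (BExp c) = BExp (f c)"

primrec ren_p :: "('ch \<Rightarrow> 'ch) \<Rightarrow> ('ch,'a,'f) proc \<Rightarrow> ('ch,'a,'f) proc" where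
  "ren_p f (PSnd c e P) = PSnd (f c) e (ren_p f P)"
| "ren_p f (PRcv c x P Q) = PRcv (f c) x (ren_p f P) (ren_p f Q)"
| "ren_p f (PSig P) = PSig (ren_p f P)"
| "ren_p f (PTau P) = PTau (ren_p f P)"
| "ren_p f (PSum P Q) = PSum (ren_p f P) (ren_p f Q)"
| "ren_p f (PCond b P Q) = PCond (ren_b f b) (ren_p f P) (ren_p f Q)"
| "ren_p f (PVar X) = PVar X"
| "ren_p f PNil = PNil"
| "ren_p f (PFix X P) = PFix X (ren_p f P)"

text \<open>renaming of all channel occurrences (free and bound) by f; used with swaps\<close>
primrec ren_s :: "('ch \<Rightarrow> 'ch) \<Rightarrow> ('ch,'a,'f) sys \<Rightarrow> ('ch,'a,'f) sys" where
  "ren_s f (SProc P) = SProc (ren_p f P)"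
| "ren_s f (SRcv c x P) = SRcv (f c) x (ren_p f P)"
| "ren_s f (SPar W1 W2) = SPar (ren_s f W1) (ren_s f W2)"
| "ren_s f (SNu c s W) = SNu (f c) s (ren_s f W)"

definition swap :: "'ch \<Rightarrow> 'ch \<Rightarrow> 'ch \<Rightarrow> 'ch" where
  "swap a b x = (if x = a then b else if x = b then a else x)"

inductive alpha :: "('ch,'a,'f) sys \<Rightarrow> ('ch,'a,'f) sys \<Rightarrow> bool" where
  alpha_refl: "alpha W W"
| alpha_sym: "alpha W W' \<Longrightarrow> alpha W' W"
| alpha_trans: "alpha W1 W2 \<Longrightarrow> alpha W2 W3 \<Longrightarrow> alpha W1 W3"
| alpha_par: "alpha W1 W1' \<Longrightarrow> alpha W2 W2' \<Longrightarrow> alpha (SPar W1 W2) (SPar W1' W2')"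
| alpha_nu: "alpha W W' \<Longrightarrow> alpha (SNu c s W) (SNu c s W')"
| alpha_ren: "c' \<notin> fc W \<Longrightarrow> alpha (SNu c s W) (SNu c' s (ren_s (swap c c') W))"

section \<open>Substitution and evaluation\<close>

primrec subst_e :: "nat \<Rightarrow> 'a \<Rightarrow> ('a,'f) exp \<Rightarrow> ('a,'f) exp" where
  "subst_e x w (EVal v) = EVal v"
| "subst_e x w (EVar y) = (if y = x then EVal w else EVar y)"
| "subst_e x w (EApp f es) = EApp f (map (subst_e x w) es)"

fun subst_b :: "nat \<Rightarrow> 'a \<Rightarrow> ('ch,'a,'f) bexp \<Rightarrow> ('ch,'a,'f) bexp" where
  "subst_b x w (BEq e1 e2) = BEq (subst_e x w e1) (subst_e x w e2)"
| "subst_b x w (BExp c) = BExp c"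

text \<open>{w/x}P for a closed value w (no capture possible)\<close>
primrec dsubst :: "nat \<Rightarrow> 'a \<Rightarrow> ('ch,'a,'f) proc \<Rightarrow> ('ch,'a,'f) proc" where
  "dsubst x w (PSnd c e P) = PSnd c (subst_e x w e) (dsubst x w P)"
| "dsubst x w (PRcv c y P Q) = PRcv c y (if y = x then P else dsubst x w P) (dsubst x w Q)"
| "dsubst x w (PSig P) = PSig (dsubst x w P)"
| "dsubst x w (PTau P) = PTau (dsubst x w P)"
| "dsubst x w (PSum P Q) = PSum (dsubst x w P) (dsubst x w Q)"
| "dsubst x w (PCond b P Q) = PCond (subst_b x w b) (dsubst x w P) (dsubst x w Q)"
| "dsubst x w (PVar X) = PVar X"
| "dsubst x w PNil = PNil"
| "dsubst x w (PFix X P) = PFix X (dsubst x w P)"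

text \<open>{R/X}P (used with R = fix X.P, which is closed in closed configurations)\<close>
primrec psubst :: "nat \<Rightarrow> ('ch,'a,'f) proc \<Rightarrow> ('ch,'a,'f) proc \<Rightarrow> ('ch,'a,'f) proc" where
  "psubst X R (PSnd c e P) = PSnd c e (psubst X R P)"
| "psubst X R (PRcv c y P Q) = PRcv c y (psubst X R P) (psubst X R Q)"
| "psubst X R (PSig P) = PSig (psubst X R P)"
| "psubst X R (PTau P) = PTau (psubst X R P)"
| "psubst X R (PSum P Q) = PSum (psubst X R P) (psubst X R Q)"
| "psubst X R (PCond b P Q) = PCond b (psubst X R P) (psubst X R Q)"
| "psubst X R (PVar Y) = (if Y = X then R else PVar Y)"
| "psubst X R PNil = PNil"
| "psubst X R (PFix Y P) = (if Y = X then PFix Y P else PFix Y (psubst X R P))"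

primrec eval :: "('f \<Rightarrow> 'a list \<Rightarrow> 'a) \<Rightarrow> ('a,'f) exp \<Rightarrow> 'a option" where
  "eval I (EVal v) = Some v"
| "eval I (EVar x) = None"
| "eval I (EApp f es) = map_option (I f) (those (map (eval I) es))"

type_synonym ('ch,'a) env = "'ch \<Rightarrow> nat \<times> 'a"

definition idle :: "('ch,'a) env \<Rightarrow> 'ch \<Rightarrow> bool" where
  "idle \<Gamma> c \<longleftrightarrow> fst (\<Gamma> c) = 0"

definition exposed :: "('ch,'a) env \<Rightarrow> 'ch \<Rightarrow> bool" where
  "exposed \<Gamma> c \<longleftrightarrow> fst (\<Gamma> c) > 0"

fun beval :: "('f \<Rightarrow> 'a list \<Rightarrow> 'a) \<Rightarrow> ('ch,'a) env \<Rightarrow> ('ch,'a,'f) bexp \<Rightarrow> bool" where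
  "beval I \<Gamma> (BEq e1 e2) = (eval I e1 = eval I e2)"
| "beval I \<Gamma> (BExp c) = exposed \<Gamma> c"

datatype ('ch,'a) act = Out 'ch 'a | In 'ch 'a | Time | TauA

fun upd :: "('a \<Rightarrow> nat) \<Rightarrow> 'a \<Rightarrow> ('ch,'a) act \<Rightarrow> ('ch,'a) env \<Rightarrow> ('ch,'a) env" where
  "upd \<delta> err Time \<Gamma> = (\<lambda>c. (fst (\<Gamma> c) - 1, snd (\<Gamma> c)))"
| "upd \<delta> err (Out c v) \<Gamma> =
     \<Gamma>(c := (if fst (\<Gamma> c) = 0 then (\<delta> v, v) else (max (\<delta> v) (fst (\<Gamma> c)), err)))"
| "upd \<delta> err (In c v) \<Gamma> =
     \<Gamma>(c := (if fst (\<Gamma> c) = 0 then (\<delta> v, v) else (max (\<delta> v) (fst (\<Gamma> c)), err)))"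
| "upd \<delta> err TauA \<Gamma> = \<Gamma>"

fun act_chans :: "('ch,'a) act \<Rightarrow> 'ch set" where
  "act_chans (Out c v) = {c}"
| "act_chans (In c v) = {c}"
| "act_chans Time = {}"
| "act_chans TauA = {}"

fun out_or_tau :: "('ch,'a) act \<Rightarrow> bool" where
  "out_or_tau (Out c v) = True"
| "out_or_tau TauA = True"
| "out_or_tau _ = False"

primrec rcv_p :: "('ch,'a,'f) proc \<Rightarrow> 'ch \<Rightarrow> bool" where
  "rcv_p (PSnd d e P) c = False"
| "rcv_p (PRcv d x P Q) c = (d = c)"
| "rcv_p (PSig P) c = False"
| "rcv_p (PTau P) c = False"
| "rcv_p (PSum P Q) c = (rcv_p P c \<or> rcv_p Q c)"
| "rcv_p (PCond b P Q) c = False"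
| "rcv_p (PVar X) c = False"
| "rcv_p PNil c = False"
| "rcv_p (PFix X P) c = rcv_p P c"

text \<open>For restriction: if the bound name equals c it is alpha-renamed away, so the answer is False.\<close>
primrec rcv_s :: "('ch,'a,'f) sys \<Rightarrow> 'ch \<Rightarrow> bool" where
  "rcv_s (SProc P) c = rcv_p P c"
| "rcv_s (SRcv d x P) c = False"
| "rcv_s (SPar W1 W2) c = (rcv_s W1 c \<or> rcv_s W2 c)"
| "rcv_s (SNu d s W) c = (d \<noteq> c \<and> rcv_s W c)"

definition rcv_conf :: "('ch,'a) env \<Rightarrow> ('ch,'a,'f) sys \<Rightarrow> 'ch \<Rightarrow> bool" where
  "rcv_conf \<Gamma> W c \<longleftrightarrow> idle \<Gamma> c \<and> rcv_s W c"

section \<open>Intensional semantics\<close>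

inductive trans :: "('a \<Rightarrow> nat) \<Rightarrow> 'a \<Rightarrow> ('f \<Rightarrow> 'a list \<Rightarrow> 'a) \<Rightarrow>
    ('ch,'a) env \<Rightarrow> ('ch,'a,'f) sys \<Rightarrow> ('ch,'a) act \<Rightarrow> ('ch,'a,'f) sys \<Rightarrow> bool"
  for \<delta> :: "'a \<Rightarrow> nat" and err :: 'a and I :: "'f \<Rightarrow> 'a list \<Rightarrow> 'a" where
  Snd: "eval I e = Some v \<Longrightarrow>
     trans \<delta> err I \<Gamma> (SProc (PSnd c e P)) (Out c v) (SProc (sigmas (\<delta> v) P))"
| Rcv: "idle \<Gamma> c \<Longrightarrow> trans \<delta> err I \<Gamma> (SProc (PRcv c x P Q)) (In c v) (SRcv c x P)"
| RcvIgn: "\<not> rcv_conf \<Gamma> W c \<Longrightarrow> trans \<delta> err I \<Gamma> W (In c v) W"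
| Sync1: "trans \<delta> err I \<Gamma> W1 (Out c v) W1' \<Longrightarrow> trans \<delta> err I \<Gamma> W2 (In c v) W2' \<Longrightarrow>
     trans \<delta> err I \<Gamma> (SPar W1 W2) (Out c v) (SPar W1' W2')"
| Sync2: "trans \<delta> err I \<Gamma> W1 (In c v) W1' \<Longrightarrow> trans \<delta> err I \<Gamma> W2 (Out c v) W2' \<Longrightarrow>
     trans \<delta> err I \<Gamma> (SPar W1 W2) (Out c v) (SPar W1' W2')"
| RcvPar: "trans \<delta> err I \<Gamma> W1 (In c v) W1' \<Longrightarrow> trans \<delta> err I \<Gamma> W2 (In c v) W2' \<Longrightarrow>
     trans \<delta> err I \<Gamma> (SPar W1 W2) (In c v) (SPar W1' W2')"
| TimeNil: "trans \<delta> err I \<Gamma> (SProc PNil) Time (SProc PNil)"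
| Sleep: "trans \<delta> err I \<Gamma> (SProc (PSig P)) Time (SProc P)"
| ActRcv: "fst (\<Gamma> c) > 1 \<Longrightarrow> trans \<delta> err I \<Gamma> (SRcv c x P) Time (SRcv c x P)"
| EndRcv: "\<Gamma> c = (1, w) \<Longrightarrow> trans \<delta> err I \<Gamma> (SRcv c x P) Time (SProc (dsubst x w P))"
| Timeout: "idle \<Gamma> c \<Longrightarrow> trans \<delta> err I \<Gamma> (SProc (PRcv c x P Q)) Time (SProc Q)"
| RcvLate: "exposed \<Gamma> c \<Longrightarrow>
     trans \<delta> err I \<Gamma> (SProc (PRcv c x P Q)) TauA (SRcv c x (dsubst x err P))"
| Tau: "trans \<delta> err I \<Gamma> (SProc (PTau P)) TauA (SProc P)"
| Then: "beval I \<Gamma> b \<Longrightarrow> trans \<delta> err I \<Gamma> (SProc (PCond b P Q)) TauA (SProc (PSig P))"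
| Else: "\<not> beval I \<Gamma> b \<Longrightarrow> trans \<delta> err I \<Gamma> (SProc (PCond b P Q)) TauA (SProc (PSig Q))"
| TimePar: "trans \<delta> err I \<Gamma> W1 Time W1' \<Longrightarrow> trans \<delta> err I \<Gamma> W2 Time W2' \<Longrightarrow>
     trans \<delta> err I \<Gamma> (SPar W1 W2) Time (SPar W1' W2')"
| TauPar1: "trans \<delta> err I \<Gamma> W1 TauA W1' \<Longrightarrow> trans \<delta> err I \<Gamma> (SPar W1 W2) TauA (SPar W1' W2)"
| TauPar2: "trans \<delta> err I \<Gamma> W2 TauA W2' \<Longrightarrow> trans \<delta> err I \<Gamma> (SPar W1 W2) TauA (SPar W1 W2')"
| Rec: "trans \<delta> err I \<Gamma> (SProc (psubst X (PFix X P) P)) l W \<Longrightarrow>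
     trans \<delta> err I \<Gamma> (SProc (PFix X P)) l W"
| Sum1: "out_or_tau l \<Longrightarrow> trans \<delta> err I \<Gamma> (SProc P) l W \<Longrightarrow>
     trans \<delta> err I \<Gamma> (SProc (PSum P Q)) l W"
| Sum2: "out_or_tau l \<Longrightarrow> trans \<delta> err I \<Gamma> (SProc Q) l W \<Longrightarrow>
     trans \<delta> err I \<Gamma> (SProc (PSum P Q)) l W"
| SumTime: "trans \<delta> err I \<Gamma> (SProc P) Time (SProc P') \<Longrightarrow> trans \<delta> err I \<Gamma> (SProc Q) Time (SProc Q') \<Longrightarrow>
     trans \<delta> err I \<Gamma> (SProc (PSum P Q)) Time (SProc (PSum P' Q'))"
| SumRcv1: "trans \<delta> err I \<Gamma> (SProc P) (In c v) W \<Longrightarrow> rcv_conf \<Gamma> (SProc P) c \<Longrightarrow>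
     trans \<delta> err I \<Gamma> (SProc (PSum P Q)) (In c v) W"
| SumRcv2: "trans \<delta> err I \<Gamma> (SProc Q) (In c v) W \<Longrightarrow> rcv_conf \<Gamma> (SProc Q) c \<Longrightarrow>
     trans \<delta> err I \<Gamma> (SProc (PSum P Q)) (In c v) W"
| ResI: "trans \<delta> err I (\<Gamma>(c := s)) W (Out c w) W' \<Longrightarrow>
     trans \<delta> err I \<Gamma> (SNu c s W) TauA (SNu c (upd \<delta> err (Out c w) (\<Gamma>(c := s)) c) W')"
| ResV: "trans \<delta> err I (\<Gamma>(c := s)) W l W' \<Longrightarrow> c \<notin> act_chans l \<Longrightarrow>
     trans \<delta> err I \<Gamma> (SNu c s W) l (SNu c (upd \<delta> err l (\<Gamma>(c := s)) c) W')"
| Alpha: "alpha W W1 \<Longrightarrow> trans \<delta> err I \<Gamma> W1 l W1' \<Longrightarrow> alpha W1' W' \<Longrightarrow>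
     trans \<delta> err I \<Gamma> W l W'"

definition red_i :: "('a \<Rightarrow> nat) \<Rightarrow> 'a \<Rightarrow> ('f \<Rightarrow> 'a list \<Rightarrow> 'a) \<Rightarrow>
    ('ch,'a) env \<times> ('ch,'a,'f) sys \<Rightarrow> ('ch,'a) env \<times> ('ch,'a,'f) sys \<Rightarrow> bool" where
  "red_i \<delta> err I C C' \<longleftrightarrow> (\<exists>l. out_or_tau l \<and> trans \<delta> err I (fst C) (snd C) l (snd C')
                                  \<and> fst C' = upd \<delta> err l (fst C))"

definition red_sigma :: "('a \<Rightarrow> nat) \<Rightarrow> 'a \<Rightarrow> ('f \<Rightarrow> 'a list \<Rightarrow> 'a) \<Rightarrow>
    ('ch,'a) env \<times> ('ch,'a,'f) sys \<Rightarrow> ('ch,'a) env \<times> ('ch,'a,'f) sys \<Rightarrow> bool" where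
  "red_sigma \<delta> err I C C' \<longleftrightarrow> trans \<delta> err I (fst C) (snd C) Time (snd C')
                                  \<and> fst C' = upd \<delta> err Time (fst C)"

definition red_isi :: "('a \<Rightarrow> nat) \<Rightarrow> 'a \<Rightarrow> ('f \<Rightarrow> 'a list \<Rightarrow> 'a) \<Rightarrow>
    ('ch,'a) env \<times> ('ch,'a,'f) sys \<Rightarrow> ('ch,'a) env \<times> ('ch,'a,'f) sys \<Rightarrow> bool" where
  "red_isi \<delta> err I C C' \<longleftrightarrow>
     (\<exists>C1 C2. (red_i \<delta> err I)\<^sup>*\<^sup>* C C1 \<and> red_sigma \<delta> err I C1 C2 \<and> (red_i \<delta> err I)\<^sup>*\<^sup>* C2 C')"

section \<open>Extensional semantics\<close>

datatype ('ch,'a) eact = EIn 'ch 'a | ETime | ETau | EGamma 'ch 'a | EIota 'ch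

inductive ext :: "('a \<Rightarrow> nat) \<Rightarrow> 'a \<Rightarrow> ('f \<Rightarrow> 'a list \<Rightarrow> 'a) \<Rightarrow>
    ('ch,'a) env \<Rightarrow> ('ch,'a,'f) sys \<Rightarrow> ('ch,'a) eact \<Rightarrow> ('ch,'a) env \<Rightarrow> ('ch,'a,'f) sys \<Rightarrow> bool"
  for \<delta> :: "'a \<Rightarrow> nat" and err :: 'a and I :: "'f \<Rightarrow> 'a list \<Rightarrow> 'a" where
  Input: "trans \<delta> err I \<Gamma> W (In c v) W' \<Longrightarrow>
     ext \<delta> err I \<Gamma> W (EIn c v) (upd \<delta> err (In c v) \<Gamma>) W'"
| ETimeR: "trans \<delta> err I \<Gamma> W Time W' \<Longrightarrow> ext \<delta> err I \<Gamma> W ETime (upd \<delta> err Time \<Gamma>) W'"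
| Shh: "trans \<delta> err I \<Gamma> W (Out c v) W' \<Longrightarrow> ext \<delta> err I \<Gamma> W ETau (upd \<delta> err (Out c v) \<Gamma>) W'"
| TauExt: "trans \<delta> err I \<Gamma> W TauA W' \<Longrightarrow> ext \<delta> err I \<Gamma> W ETau \<Gamma> W'"
| Deliver: "\<Gamma> c = (1, v) \<Longrightarrow> trans \<delta> err I \<Gamma> W Time W' \<Longrightarrow>
     ext \<delta> err I \<Gamma> W (EGamma c v) (upd \<delta> err Time \<Gamma>) W'"
| Idle: "idle \<Gamma> c \<Longrightarrow> ext \<delta> err I \<Gamma> W (EIota c) \<Gamma> W"

definition ext_tau :: "('a \<Rightarrow> nat) \<Rightarrow> 'a \<Rightarrow> ('f \<Rightarrow> 'a list \<Rightarrow> 'a) \<Rightarrow>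
    ('ch,'a) env \<times> ('ch,'a,'f) sys \<Rightarrow> ('ch,'a) env \<times> ('ch,'a,'f) sys \<Rightarrow> bool" where
  "ext_tau \<delta> err I C C' \<longleftrightarrow> ext \<delta> err I (fst C) (snd C) ETau (fst C') (snd C')"

definition weak_ext :: "('a \<Rightarrow> nat) \<Rightarrow> 'a \<Rightarrow> ('f \<Rightarrow> 'a list \<Rightarrow> 'a) \<Rightarrow>
    ('ch,'a) env \<Rightarrow> ('ch,'a,'f) sys \<Rightarrow> ('ch,'a) eact \<Rightarrow> ('ch,'a) env \<Rightarrow> ('ch,'a,'f) sys \<Rightarrow> bool" where
  "weak_ext \<delta> err I \<Gamma> W a \<Gamma>' W' \<longleftrightarrow>
     (\<exists>\<Gamma>1 W1 \<Gamma>2 W2. (ext_tau \<delta> err I)\<^sup>*\<^sup>* (\<Gamma>, W) (\<Gamma>1, W1) \<and> ext \<delta> err I \<Gamma>1 W1 a \<Gamma>2 W2 \<and>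
        (ext_tau \<delta> err I)\<^sup>*\<^sup>* (\<Gamma>2, W2) (\<Gamma>', W'))"

inductive wf_conf :: "('ch,'a) env \<Rightarrow> ('ch,'a,'f) sys \<Rightarrow> bool" where
  wf_proc: "fdv_p P = {} \<Longrightarrow> fpv_p P = {} \<Longrightarrow> wf_conf \<Gamma> (SProc P)"
| wf_rcv: "exposed \<Gamma> c \<Longrightarrow> wf_conf \<Gamma> (SRcv c x P)"
| wf_par: "wf_conf \<Gamma> W1 \<Longrightarrow> wf_conf \<Gamma> W2 \<Longrightarrow> wf_conf \<Gamma> (SPar W1 W2)"
| wf_nu: "wf_conf (\<Gamma>(c := s)) W \<Longrightarrow> wf_conf \<Gamma> (SNu c s W)"

definition T_gamma :: "'ch \<Rightarrow> 'a \<Rightarrow> 'ch \<Rightarrow> 'ch \<Rightarrow> 'ch \<Rightarrow> 'a \<Rightarrow> 'a \<Rightarrow> 'a \<Rightarrow> nat \<Rightarrow> ('ch,'a,'f) sys" where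
  "T_gamma c v eureka fail d arb no u x =
     SNu d (0, u)
       (SPar (SRcv c x (PSum (PCond (BEq (EVar x) (EVal v)) (PSnd d (EVal arb) PNil) PNil)
                              (PSnd fail (EVal no) PNil)))
             (SProc (sigmas 2 (PCond (BExp d) (PSnd eureka (EVal arb) PNil) PNil))))"

definition T_gamma_ok :: "'ch \<Rightarrow> 'ch \<Rightarrow> 'a \<Rightarrow> 'a \<Rightarrow> ('ch,'a,'f) sys" where
  "T_gamma_ok eureka d arb u =
     SNu d (0, u)
       (SPar (SProc (PSig (PSnd d (EVal arb) PNil)))
             (SProc (PSig (PCond (BExp d) (PSnd eureka (EVal arb) PNil) PNil))))"

end

theory Submission
  imports Defs
begin

text \<open>
  The receiver of the test is already active, so the test can let time pass only when the
  transmission on c is in its last unit, i.e. exactly when W performs the time step of a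
  \<open>\<gamma>(c, w)\<close> action; the test then holds w. Apart from that single time step the test is quiescent:
  it has no instantaneous moves and ignores every broadcast. Hence the instantaneous reductions of
  \<open>W | T\<close> before the time step are exactly the \<open>\<tau>\<close>-moves of W. After it, the only way
  to reach \<open>T\<^sup>\<checkmark>\<close> is the \<open>\<tau>\<close>-step of the test that compares w with v and succeeds;
  every other move of the test leads to a quiescent state that is not \<open>T\<^sup>\<checkmark>\<close> and
  never changes again. Test states are compared after erasing the names of bound channels, which
  makes the argument insensitive to alpha-renaming of the restricted channel d.
\<close>

section \<open>Erasing bound channel names\<close>

primrec nameless_b :: "('ch \<Rightarrow> 'c) \<Rightarrow> ('ch,'a,'f) bexp \<Rightarrow> ('c,'a,'f) bexp" where
  "nameless_b \<rho> (BEq e1 e2) = BEq e1 e2"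
| "nameless_b \<rho> (BExp c) = BExp (\<rho> c)"

primrec nameless_p :: "('ch \<Rightarrow> 'c) \<Rightarrow> ('ch,'a,'f) proc \<Rightarrow> ('c,'a,'f) proc" where
  "nameless_p \<rho> (PSnd c e P) = PSnd (\<rho> c) e (nameless_p \<rho> P)"
| "nameless_p \<rho> (PRcv c x P Q) = PRcv (\<rho> c) x (nameless_p \<rho> P) (nameless_p \<rho> Q)"
| "nameless_p \<rho> (PSig P) = PSig (nameless_p \<rho> P)"
| "nameless_p \<rho> (PTau P) = PTau (nameless_p \<rho> P)"
| "nameless_p \<rho> (PSum P Q) = PSum (nameless_p \<rho> P) (nameless_p \<rho> Q)"
| "nameless_p \<rho> (PCond b P Q) = PCond (nameless_b \<rho> b) (nameless_p \<rho> P) (nameless_p \<rho> Q)"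
| "nameless_p \<rho> (PVar X) = PVar X"
| "nameless_p \<rho> PNil = PNil"
| "nameless_p \<rho> (PFix X P) = PFix X (nameless_p \<rho> P)"

primrec nameless :: "('ch \<Rightarrow> 'ch option) \<Rightarrow> ('ch,'a,'f) sys \<Rightarrow> ('ch option,'a,'f) sys" where
  "nameless \<rho> (SProc P) = SProc (nameless_p \<rho> P)"
| "nameless \<rho> (SRcv c x P) = SRcv (\<rho> c) x (nameless_p \<rho> P)"
| "nameless \<rho> (SPar W1 W2) = SPar (nameless \<rho> W1) (nameless \<rho> W2)"
| "nameless \<rho> (SNu c s W) = SNu None s (nameless (\<rho>(c := None)) W)"

text \<open>Bound channels become \<open>None\<close>, so alpha-equivalent terms have the same image
  (\<open>alpha_nameless\<close>).\<close>

abbreviation erase :: "('ch,'a,'f) sys \<Rightarrow> ('ch option,'a,'f) sys" where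
  "erase \<equiv> nameless Some"

lemma nameless_b_ren_b: "nameless_b \<rho> (ren_b f b) = nameless_b (\<rho> \<circ> f) b"
  by (cases b) auto

lemma nameless_p_ren_p: "nameless_p \<rho> (ren_p f P) = nameless_p (\<rho> \<circ> f) P"
  by (induction P) (auto simp: nameless_b_ren_b comp_def)

lemma nameless_ren_s: "inj f \<Longrightarrow> nameless \<rho> (ren_s f W) = nameless (\<rho> \<circ> f) W"
proof (induction W arbitrary: \<rho>)
  case (SNu c s W)
  have "(\<lambda>a. if f a = f c then None else \<rho> (f a)) = (\<rho> \<circ> f)(c := None)"
    using SNu.prems by (auto simp: fun_eq_iff inj_eq)
  then show ?case using SNu by (simp add: comp_def)
qed (auto simp: nameless_p_ren_p)

lemma nameless_b_cong: "\<forall>c\<in>chans_b b. \<rho> c = \<rho>' c \<Longrightarrow> nameless_b \<rho> b = nameless_b \<rho>' b"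
  by (cases b) auto

lemma nameless_p_cong: "\<forall>c\<in>chans_p P. \<rho> c = \<rho>' c \<Longrightarrow> nameless_p \<rho> P = nameless_p \<rho>' P"
  by (induction P) (auto intro: nameless_b_cong)

lemma nameless_cong: "\<forall>c\<in>fc W. \<rho> c = \<rho>' c \<Longrightarrow> nameless \<rho> W = nameless \<rho>' W"
  by (induction W arbitrary: \<rho> \<rho>') (auto intro!: nameless_p_cong)

lemma inj_swap: "inj (swap a b)"
  by (rule injI) (auto simp: swap_def split: if_splits)

lemma alpha_nameless: "alpha W W' \<Longrightarrow> nameless \<rho> W = nameless \<rho> W'"
proof (induction arbitrary: \<rho> rule: alpha.induct)
  case (alpha_ren c' W c s)
  have "nameless ((\<rho>(c' := None)) \<circ> swap c c') W = nameless (\<rho>(c := None)) W"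
    using alpha_ren.hyps by (intro nameless_cong) (auto simp: swap_def)
  then show ?case by (simp add: nameless_ren_s inj_swap)
qed auto

lemma nameless_eq_SPar_iff:
  "nameless \<rho> W = SPar A B \<longleftrightarrow> (\<exists>W1 W2. W = SPar W1 W2 \<and> nameless \<rho> W1 = A \<and> nameless \<rho> W2 = B)"
  by (cases W) auto
lemma nameless_eq_SProc_iff: "nameless \<rho> W = SProc Q \<longleftrightarrow> (\<exists>P. W = SProc P \<and> nameless_p \<rho> P = Q)"
  by (cases W) auto
lemma nameless_eq_SRcv_iff:
  "nameless \<rho> W = SRcv a y Q \<longleftrightarrow> (\<exists>c P. W = SRcv c y P \<and> \<rho> c = a \<and> nameless_p \<rho> P = Q)"
  by (cases W) auto
lemma nameless_eq_SNu_iff: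
  "nameless \<rho> W = SNu a s Q \<longleftrightarrow> a = None \<and> (\<exists>c B. W = SNu c s B \<and> nameless (\<rho>(c := None)) B = Q)"
  by (cases W) auto
lemma nameless_p_eq_PSnd_iff:
  "nameless_p \<rho> P = PSnd a e Q \<longleftrightarrow> (\<exists>c P'. P = PSnd c e P' \<and> \<rho> c = a \<and> nameless_p \<rho> P' = Q)"
  by (cases P) auto
lemma nameless_p_eq_PSig_iff: "nameless_p \<rho> P = PSig Q \<longleftrightarrow> (\<exists>P'. P = PSig P' \<and> nameless_p \<rho> P' = Q)"
  by (cases P) auto
lemma nameless_p_eq_PSum_iff:
  "nameless_p \<rho> P = PSum Q1 Q2 \<longleftrightarrow>
     (\<exists>P1 P2. P = PSum P1 P2 \<and> nameless_p \<rho> P1 = Q1 \<and> nameless_p \<rho> P2 = Q2)"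
  by (cases P) auto
lemma nameless_p_eq_PCond_iff:
  "nameless_p \<rho> P = PCond bb Q1 Q2 \<longleftrightarrow>
     (\<exists>b P1 P2. P = PCond b P1 P2 \<and> nameless_b \<rho> b = bb \<and>
        nameless_p \<rho> P1 = Q1 \<and> nameless_p \<rho> P2 = Q2)"
  by (cases P) auto
lemma nameless_p_eq_PNil_iff: "nameless_p \<rho> P = PNil \<longleftrightarrow> P = PNil"
  by (cases P) auto
lemma nameless_b_eq_BEq_iff: "nameless_b \<rho> b = BEq e1 e2 \<longleftrightarrow> b = BEq e1 e2"
  by (cases b) auto
lemma nameless_b_eq_BExp_iff: "nameless_b \<rho> b = BExp a \<longleftrightarrow> (\<exists>c. b = BExp c \<and> \<rho> c = a)"
  by (cases b) auto

lemmas nameless_eq_iffs =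
  nameless_eq_SPar_iff nameless_eq_SProc_iff nameless_eq_SRcv_iff nameless_eq_SNu_iff
  nameless_p_eq_PSnd_iff nameless_p_eq_PSig_iff nameless_p_eq_PSum_iff nameless_p_eq_PCond_iff
  nameless_p_eq_PNil_iff nameless_b_eq_BEq_iff nameless_b_eq_BExp_iff

primrec nu_free :: "('ch,'a,'f) sys \<Rightarrow> bool" where
  "nu_free (SProc P) = True"
| "nu_free (SRcv c x P) = True"
| "nu_free (SPar A B) = (nu_free A \<and> nu_free B)"
| "nu_free (SNu c s W) = False"

lemma alpha_nu_free: "alpha X Y \<Longrightarrow> nu_free X \<or> nu_free Y \<Longrightarrow> X = Y"
  by (induction rule: alpha.induct) auto

lemma alpha_nu_free_iff:
  "nu_free X \<Longrightarrow> alpha X Y \<longleftrightarrow> Y = X"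
  "nu_free Y \<Longrightarrow> alpha X Y \<longleftrightarrow> X = Y"
  using alpha_nu_free alpha_refl by blast+

primrec par_split :: "('ch,'a,'f) sys \<Rightarrow> (('ch,'a,'f) sys \<times> ('ch,'a,'f) sys) option" where
  "par_split (SProc P) = None"
| "par_split (SRcv c x P) = None"
| "par_split (SPar A B) = Some (A, B)"
| "par_split (SNu c s W) = None"

text \<open>Because \<open>alpha\<close> has symmetry and transitivity rules, inversion on parallel
  compositions is proved for an invariant that is itself symmetric and transitive.\<close>

lemma alpha_conversep: "alpha\<inverse>\<inverse> = alpha"
  by (intro ext) (metis alpha_sym conversep_iff)

lemma alpha_OO: "alpha OO alpha = alpha"
  by (intro ext iffI) (blast intro: alpha_trans alpha_refl)+

lemma alpha_par_split: "alpha X Y \<Longrightarrow> rel_option (rel_prod alpha alpha) (par_split X) (par_split Y)"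
proof (induction rule: alpha.induct)
  case (alpha_refl W) then show ?case by (cases W) (auto intro: alpha.alpha_refl)
next
  case (alpha_sym W W')
  then show ?case
    by (metis alpha_conversep option.rel_flip prod.rel_conversep)
next
  case (alpha_trans W1 W2 W3)
  have "(rel_option (rel_prod alpha alpha) OO rel_option (rel_prod alpha alpha))
      (par_split W1) (par_split W3)"
    using alpha_trans.IH by (rule relcomppI)
  then show ?case by (simp add: option.rel_compp[symmetric] prod.rel_compp[symmetric] alpha_OO)
qed simp_all

lemma alpha_SParD:
  "alpha (SPar A B) Y \<Longrightarrow> \<exists>A' B'. Y = SPar A' B' \<and> alpha A A' \<and> alpha B B'"
  using alpha_par_split[of "SPar A B" Y] by (cases Y) auto

section \<open>Quiescent systems\<close>

fun inert_p :: "('ch,'a,'f) proc \<Rightarrow> bool" where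
  "inert_p (PSig P) = True"
| "inert_p PNil = True"
| "inert_p _ = False"

primrec inert :: "('ch,'a,'f) sys \<Rightarrow> bool" where
  "inert (SProc P) = inert_p P"
| "inert (SRcv c x P) = True"
| "inert (SPar A B) = (inert A \<and> inert B)"
| "inert (SNu c s W) = inert W"

primrec deaf_p :: "('ch,'a,'f) proc \<Rightarrow> bool" where
  "deaf_p (PSnd c e P) = deaf_p P"
| "deaf_p (PRcv c x P Q) = False"
| "deaf_p (PSig P) = deaf_p P"
| "deaf_p (PTau P) = deaf_p P"
| "deaf_p (PSum P Q) = (deaf_p P \<and> deaf_p Q)"
| "deaf_p (PCond b P Q) = (deaf_p P \<and> deaf_p Q)"
| "deaf_p (PVar X) = True"
| "deaf_p PNil = True"
| "deaf_p (PFix X P) = False"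

primrec deaf :: "('ch,'a,'f) sys \<Rightarrow> bool" where
  "deaf (SProc P) = deaf_p P"
| "deaf (SRcv c x P) = True"
| "deaf (SPar A B) = (deaf A \<and> deaf B)"
| "deaf (SNu c s W) = deaf W"

definition quiescent :: "('ch,'a,'f) sys \<Rightarrow> bool" where
  "quiescent W \<longleftrightarrow> inert W \<and> deaf W"

lemma inert_p_nameless_p: "inert_p (nameless_p \<rho> P) = inert_p P"
  by (cases P) auto

lemma inert_nameless: "inert (nameless \<rho> W) = inert W"
  by (induction W arbitrary: \<rho>) (auto simp: inert_p_nameless_p)

lemma deaf_p_nameless_p: "deaf_p (nameless_p \<rho> P) = deaf_p P"
  by (induction P) auto

lemma deaf_nameless: "deaf (nameless \<rho> W) = deaf W"
  by (induction W arbitrary: \<rho>) (auto simp: deaf_p_nameless_p)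

lemma quiescent_nameless: "quiescent (nameless \<rho> W) = quiescent W"
  by (simp add: quiescent_def inert_nameless deaf_nameless)

lemma inert_alpha: "alpha X Y \<Longrightarrow> inert X = inert Y"
  by (metis alpha_nameless inert_nameless)

lemma deaf_alpha: "alpha X Y \<Longrightarrow> deaf X = deaf Y"
  by (metis alpha_nameless deaf_nameless)

lemma deaf_p_not_rcv_p: "deaf_p P \<Longrightarrow> \<not> rcv_p P c"
  by (induction P) auto

abbreviation check :: "('a,'f) exp \<Rightarrow> 'a \<Rightarrow> 'ch \<Rightarrow> 'ch \<Rightarrow> 'a \<Rightarrow> 'a \<Rightarrow> ('ch,'a,'f) proc" where
  "check e v d fail arb no \<equiv>
     PSum (PCond (BEq e (EVal v)) (PSnd d (EVal arb) PNil) PNil) (PSnd fail (EVal no) PNil)"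

abbreviation announce :: "'ch \<Rightarrow> 'ch \<Rightarrow> 'a \<Rightarrow> ('ch,'a,'f) proc" where
  "announce d eureka arb \<equiv> PCond (BExp d) (PSnd eureka (EVal arb) PNil) PNil"

text \<open>The test one time unit after its receiver has delivered w.\<close>

definition T_gamma_rcvd :: "'a \<Rightarrow> 'ch \<Rightarrow> 'ch \<Rightarrow> 'ch \<Rightarrow> 'a \<Rightarrow> 'a \<Rightarrow> 'a \<Rightarrow> 'a \<Rightarrow> ('ch,'a,'f) sys" where
  "T_gamma_rcvd v eureka fail d arb no u w =
     SNu d (0, u)
       (SPar (SProc (check (EVal w) v d fail arb no)) (SProc (PSig (announce d eureka arb))))"

lemma T_gamma_eq:
  "T_gamma c v eureka fail d arb no u x =
     SNu d (0, u)
       (SPar (SRcv c x (check (EVar x) v d fail arb no))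
         (SProc (PSig (PSig (announce d eureka arb)))))"
  by (simp add: T_gamma_def numeral_2_eq_2)

text \<open>A failed test stays failed: being quiescent, it does not change up to \<open>erase\<close>
  during instantaneous reductions (\<open>red_i_star_SPar_quiescent\<close>).\<close>

definition test_failed :: "'ch \<Rightarrow> 'ch \<Rightarrow> 'a \<Rightarrow> 'a \<Rightarrow> ('ch,'a,'f) sys \<Rightarrow> bool" where
  "test_failed eureka d arb u T \<longleftrightarrow> quiescent T \<and> erase T \<noteq> erase (T_gamma_ok eureka d arb u)"

lemma test_failed_erase:
  "erase T = erase T' \<Longrightarrow> test_failed eureka d arb u T = test_failed eureka d arb u T'"
  by (metis test_failed_def quiescent_nameless)

lemma inert_p_sigmas_PNil: "inert_p (sigmas n PNil)"
  by (cases n) simp_all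

lemma deaf_p_sigmas: "deaf_p (sigmas n P) = deaf_p P"
  by (induction n) simp_all

lemma nameless_p_sigmas: "nameless_p \<rho> (sigmas n P) = sigmas n (nameless_p \<rho> P)"
  by (induction n) simp_all

lemma sigmas_PNil_ne_PSig_PSnd: "sigmas n PNil \<noteq> PSig (PSnd c e P)"
proof (cases n)
  case (Suc m)
  then show ?thesis by (cases m) simp_all
qed simp

context
  fixes \<delta> :: "'a \<Rightarrow> nat" and err :: 'a and I :: "'f \<Rightarrow> 'a list \<Rightarrow> 'a"
begin

lemma inert_not_instantaneous:
  "trans \<delta> err I \<Gamma> X l Y \<Longrightarrow> inert X \<Longrightarrow> out_or_tau l \<Longrightarrow> False"
proof (induction rule: trans.induct)
  case (Alpha W W1 \<Gamma> l W1' W')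
  then show ?case using inert_alpha by blast
qed simp_all

lemma deaf_input_alpha:
  "trans \<delta> err I \<Gamma> X (In c v) Y \<Longrightarrow> deaf X \<Longrightarrow> alpha X Y"
proof (induction \<Gamma> X "In c v" Y rule: trans.induct)
  case (RcvIgn \<Gamma> W) show ?case by (rule alpha.alpha_refl)
next
  case (RcvPar \<Gamma> W1 W1' W2 W2') then show ?case by (simp add: alpha.alpha_par)
next
  case (SumRcv1 \<Gamma> P W Q) then show ?case by (simp add: rcv_conf_def deaf_p_not_rcv_p)
next
  case (SumRcv2 \<Gamma> Q W P) then show ?case by (simp add: rcv_conf_def deaf_p_not_rcv_p)
next
  case (ResV c' s \<Gamma> W W') then show ?case by (simp add: alpha.alpha_nu)
next
  case (Alpha W W1 \<Gamma> W1' W')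
  then have "alpha W1 W1'" using deaf_alpha by blast
  with Alpha.hyps(1,4) show ?case by (blast intro: alpha.alpha_trans)
qed simp_all

inductive par_step :: "('ch,'a) env \<Rightarrow> ('ch,'a,'f) sys \<Rightarrow> ('ch,'a,'f) sys \<Rightarrow> ('ch,'a) act \<Rightarrow>
    ('ch,'a,'f) sys \<Rightarrow> ('ch,'a,'f) sys \<Rightarrow> bool" where
  sync_left: "trans \<delta> err I \<Gamma> A (Out c v) A' \<Longrightarrow> trans \<delta> err I \<Gamma> B (In c v) B' \<Longrightarrow>
     par_step \<Gamma> A B (Out c v) A' B'"
| sync_right: "trans \<delta> err I \<Gamma> A (In c v) A' \<Longrightarrow> trans \<delta> err I \<Gamma> B (Out c v) B' \<Longrightarrow>
     par_step \<Gamma> A B (Out c v) A' B'"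
| input_both: "trans \<delta> err I \<Gamma> A (In c v) A' \<Longrightarrow> trans \<delta> err I \<Gamma> B (In c v) B' \<Longrightarrow>
     par_step \<Gamma> A B (In c v) A' B'"
| time_both: "trans \<delta> err I \<Gamma> A Time A' \<Longrightarrow> trans \<delta> err I \<Gamma> B Time B' \<Longrightarrow>
     par_step \<Gamma> A B Time A' B'"
| tau_left: "trans \<delta> err I \<Gamma> A TauA A' \<Longrightarrow> alpha B B' \<Longrightarrow> par_step \<Gamma> A B TauA A' B'"
| tau_right: "alpha A A' \<Longrightarrow> trans \<delta> err I \<Gamma> B TauA B' \<Longrightarrow> par_step \<Gamma> A B TauA A' B'"

lemma par_step_alpha:
  assumes "par_step \<Gamma> A1 B1 l A1' B1'"
    and "alpha A A1" "alpha B B1" "alpha A1' A'" "alpha B1' B'"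
  shows "par_step \<Gamma> A B l A' B'"
  using assms
  by (cases rule: par_step.cases)
    (blast intro: par_step.intros trans.Alpha alpha.alpha_trans)+

lemma trans_SPar_inv:
  "trans \<delta> err I \<Gamma> (SPar A B) l Y \<Longrightarrow> \<exists>A' B'. Y = SPar A' B' \<and> par_step \<Gamma> A B l A' B'"
proof (induction \<Gamma> "SPar A B" l Y arbitrary: A B rule: trans.induct)
  case (RcvIgn \<Gamma> c v)
  then have "\<not> rcv_conf \<Gamma> A c" "\<not> rcv_conf \<Gamma> B c"
    by (auto simp: rcv_conf_def)
  then show ?case by (blast intro: par_step.input_both trans.RcvIgn)
next
  case (Sync1 \<Gamma> c v A' B') then show ?case by (blast intro: par_step.sync_left)
next
  case (Sync2 \<Gamma> c v A' B') then show ?case by (blast intro: par_step.sync_right)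
next
  case (RcvPar \<Gamma> c v A' B') then show ?case by (blast intro: par_step.input_both)
next
  case (TimePar \<Gamma> A' B') then show ?case by (blast intro: par_step.time_both)
next
  case (TauPar1 \<Gamma> A') then show ?case by (blast intro: par_step.tau_left alpha.alpha_refl)
next
  case (TauPar2 \<Gamma> B') then show ?case by (blast intro: par_step.tau_right alpha.alpha_refl)
next
  case (Alpha W1 \<Gamma> l W1' W')
  obtain A1 B1 where W1: "W1 = SPar A1 B1" "alpha A A1" "alpha B B1"
    using alpha_SParD[OF Alpha.hyps(1)] by blast
  with Alpha.hyps(3) obtain A1' B1' where W1': "W1' = SPar A1' B1'" "par_step \<Gamma> A1 B1 l A1' B1'"
    by blast
  obtain A' B' where "W' = SPar A' B'" "alpha A1' A'" "alpha B1' B'"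
    using alpha_SParD Alpha.hyps(4) W1'(1) by blast
  with W1 W1'(2) show ?case by (blast intro: par_step_alpha)
qed

lemma trans_PSig_Time:
  fixes P :: "('ch,'a,'f) proc"
  shows "trans \<delta> err I \<Gamma> (SProc (PSig P)) Time Y \<Longrightarrow> Y = SProc P"
proof (induction \<Gamma> "SProc (PSig P)" "Time :: ('ch,'a) act" Y rule: trans.induct)
  case (Alpha W1 \<Gamma> W1' W')
  then show ?case by (simp add: alpha_nu_free_iff)
qed simp_all

lemma trans_SRcv_Time:
  fixes P :: "('ch,'a,'f) proc"
  shows "trans \<delta> err I \<Gamma> (SRcv c x P) Time Y \<Longrightarrow>
     (1 < fst (\<Gamma> c) \<and> Y = SRcv c x P) \<or> (\<exists>w. \<Gamma> c = (1, w) \<and> Y = SProc (dsubst x w P))"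
proof (induction \<Gamma> "SRcv c x P" "Time :: ('ch,'a) act" Y rule: trans.induct)
  case (Alpha W1 \<Gamma> W1' W')
  then show ?case by (auto simp: alpha_nu_free_iff)
qed auto

lemma trans_PSum_instantaneous:
  "trans \<delta> err I \<Gamma> (SProc (PSum P Q)) l Y \<Longrightarrow> out_or_tau l \<Longrightarrow>
     trans \<delta> err I \<Gamma> (SProc P) l Y \<or> trans \<delta> err I \<Gamma> (SProc Q) l Y"
proof (induction \<Gamma> "SProc (PSum P Q)" l Y rule: trans.induct)
  case (Alpha W1 \<Gamma> l W1' W')
  then have "trans \<delta> err I \<Gamma> (SProc P) l W1' \<or> trans \<delta> err I \<Gamma> (SProc Q) l W1'"
    by (simp add: alpha_nu_free_iff)
  then show ?case using Alpha.hyps(4) by (blast intro: trans.Alpha alpha.alpha_refl)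
qed simp_all

lemma trans_PCond_instantaneous:
  "trans \<delta> err I \<Gamma> (SProc (PCond b P Q)) l Y \<Longrightarrow> out_or_tau l \<Longrightarrow>
     l = TauA \<and> Y = SProc (PSig (if beval I \<Gamma> b then P else Q))"
proof (induction \<Gamma> "SProc (PCond b P Q)" l Y rule: trans.induct)
  case (Alpha W1 \<Gamma> l W1' W')
  then show ?case by (simp add: alpha_nu_free_iff)
qed simp_all

lemma trans_PSnd_instantaneous:
  "trans \<delta> err I \<Gamma> (SProc (PSnd c e P)) l Y \<Longrightarrow> out_or_tau l \<Longrightarrow>
     \<exists>v. l = Out c v \<and> eval I e = Some v \<and> Y = SProc (sigmas (\<delta> v) P)"
proof (induction \<Gamma> "SProc (PSnd c e P)" l Y rule: trans.induct)
  case (Alpha W1 \<Gamma> l W1' W')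
  then show ?case by (auto simp: alpha_nu_free_iff)
qed simp_all

lemma T_gamma_Time_cases:
  fixes X :: "('ch,'a,'f) sys"
  assumes "d \<noteq> c" "d \<noteq> eureka" "d \<noteq> fail"
    and "trans \<delta> err I \<Gamma> X Time Y" "erase X = erase (T_gamma c v eureka fail d arb no u x)"
  shows "(\<exists>w. \<Gamma> c = (1, w) \<and> erase Y = erase (T_gamma_rcvd v eureka fail d arb no u w))
     \<or> test_failed eureka d arb u Y"
  using assms(4,5)
proof (induction \<Gamma> X "Time :: ('ch,'a) act" Y rule: trans.induct)
  case (ResV \<Gamma> e s W W')
  from ResV.prems have W:
      "W = SPar (SRcv c x (check (EVar x) v e fail arb no))
         (SProc (PSig (PSig (announce e eureka arb))))"
    and e: "e \<noteq> c" "e \<noteq> eureka" "e \<noteq> fail" and s: "s = (0, u)"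
    using assms(1-3) by (auto simp: T_gamma_eq nameless_eq_iffs split: if_splits)
  obtain A' B' where W': "W' = SPar A' B'"
    and A': "trans \<delta> err I (\<Gamma>(e := s)) (SRcv c x (check (EVar x) v e fail arb no)) Time A'"
    and B': "trans \<delta> err I (\<Gamma>(e := s)) (SProc (PSig (PSig (announce e eureka arb)))) Time B'"
    using trans_SPar_inv[OF ResV.hyps(1)[unfolded W]] by (auto elim: par_step.cases)
  from B' have B'_eq: "B' = SProc (PSig (announce e eureka arb))"
    by (rule trans_PSig_Time)
  from trans_SRcv_Time[OF A'] e(1) consider
      (waiting) "A' = SRcv c x (check (EVar x) v e fail arb no)"
    | (delivered) w where "\<Gamma> c = (1, w)" "A' = SProc (dsubst x w (check (EVar x) v e fail arb no))"
    by auto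
  then show ?case
  proof cases
    case waiting
    then show ?thesis using W' B'_eq s e assms(1-3)
      by (simp add: test_failed_def quiescent_def T_gamma_ok_def)
  next
    case delivered
    then show ?thesis using W' B'_eq s e assms(1-3)
      by (simp add: T_gamma_rcvd_def)
  qed
next
  case (Alpha W W1 \<Gamma> W1' W')
  then show ?case by (metis alpha_nameless test_failed_erase)
qed (simp_all add: T_gamma_eq)

lemma check_instantaneous_cases:
  assumes "trans \<delta> err I \<Gamma> (SProc (check e v d fail arb no)) l Y" "out_or_tau l"
  shows "(l = TauA \<and> Y = SProc (PSig (if eval I e = Some v then PSnd d (EVal arb) PNil else PNil)))
     \<or> (l = Out fail no \<and> Y = SProc (sigmas (\<delta> no) PNil))"
  using trans_PSum_instantaneous[OF assms]
proof
  assume "trans \<delta> err I \<Gamma> (SProc (PCond (BEq e (EVal v)) (PSnd d (EVal arb) PNil) PNil)) l Y"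
  from trans_PCond_instantaneous[OF this assms(2)] show ?thesis by simp
next
  assume "trans \<delta> err I \<Gamma> (SProc (PSnd fail (EVal no) PNil)) l Y"
  from trans_PSnd_instantaneous[OF this assms(2)] show ?thesis by auto
qed

lemma T_gamma_rcvd_instantaneous_cases:
  assumes "d \<noteq> eureka" "d \<noteq> fail"
    and "trans \<delta> err I \<Gamma> X l Y" "out_or_tau l"
    and "erase X = erase (T_gamma_rcvd v eureka fail d arb no u w)"
  shows "(w = v \<and> l = TauA \<and> erase Y = erase (T_gamma_ok eureka d arb u))
     \<or> test_failed eureka d arb u Y"
  using assms(3-5)
proof (induction rule: trans.induct)
  case (ResI \<Gamma> e s W w' W')
  from ResI.prems have W:
      "W = SPar (SProc (check (EVal w) v e fail arb no)) (SProc (PSig (announce e eureka arb)))"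
    and e: "e \<noteq> eureka" "e \<noteq> fail"
    using assms(1,2) by (auto simp: T_gamma_rcvd_def nameless_eq_iffs split: if_splits)
  obtain A' B' where "par_step (\<Gamma>(e := s)) (SProc (check (EVal w) v e fail arb no))
      (SProc (PSig (announce e eureka arb))) (Out e w') A' B'"
    using trans_SPar_inv[OF ResI.hyps(1)[unfolded W]] by blast
  then have False
    using e(2) by (cases rule: par_step.cases)
      (auto dest: check_instantaneous_cases inert_not_instantaneous)
  then show ?case ..
next
  case (ResV \<Gamma> e s W l W')
  from ResV.prems have W:
      "W = SPar (SProc (check (EVal w) v e fail arb no)) (SProc (PSig (announce e eureka arb)))"
    and e: "e \<noteq> eureka" "e \<noteq> fail" and s: "s = (0, u)"
    using assms(1,2) by (auto simp: T_gamma_rcvd_def nameless_eq_iffs split: if_splits)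
  obtain A' B' where W': "W' = SPar A' B'" and step: "par_step (\<Gamma>(e := s))
      (SProc (check (EVal w) v e fail arb no)) (SProc (PSig (announce e eureka arb))) l A' B'"
    using trans_SPar_inv[OF ResV.hyps(1)[unfolded W]] by blast
  have upd_e: "upd \<delta> err l (\<Gamma>(e := s)) e = (0, u)"
    using ResV.hyps(2) ResV.prems(1) s by (cases l) auto
  from step show ?case
  proof (cases rule: par_step.cases)
    case (sync_left c' v')
    then have "A' = SProc (sigmas (\<delta> no) PNil)"
      using check_instantaneous_cases by fastforce
    moreover have "B' = SProc (PSig (announce e eureka arb))"
      using deaf_input_alpha[OF sync_left(3)] by (simp add: alpha_nu_free_iff)
    ultimately show ?thesis using W' upd_e e assms(1,2)
      by (simp add: test_failed_def quiescent_def T_gamma_ok_def inert_p_sigmas_PNil deaf_p_sigmas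
          nameless_p_sigmas sigmas_PNil_ne_PSig_PSnd)
  next
    case tau_left
    then have "A' = SProc (PSig (if w = v then PSnd e (EVal arb) PNil else PNil))"
      using check_instantaneous_cases by fastforce
    moreover have "B' = SProc (PSig (announce e eureka arb))"
      using tau_left(3) by (simp add: alpha_nu_free_iff)
    ultimately show ?thesis using W' upd_e e assms(1,2) tau_left(1)
      by (auto simp: test_failed_def quiescent_def T_gamma_ok_def)
  qed (use ResV.prems(1) in \<open>auto dest: inert_not_instantaneous\<close>)
next
  case (Alpha W W1 \<Gamma> l W1' W')
  then show ?case by (metis alpha_nameless test_failed_erase)
qed (simp_all add: T_gamma_rcvd_def)

section \<open>Runs of a system in parallel with the test\<close>

lemma ext_alpha:
  assumes "ext \<delta> err I \<Gamma> W1 a \<Gamma>' W1'" "alpha W W1" "alpha W1' W'" "\<forall>c. a \<noteq> EIota c"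
  shows "ext \<delta> err I \<Gamma> W a \<Gamma>' W'"
proof -
  have "trans \<delta> err I \<Gamma> W l W'" if "trans \<delta> err I \<Gamma> W1 l W1'" for l
    using trans.Alpha[OF assms(2) that assms(3)] .
  with assms(1,4) show ?thesis
    by (cases rule: ext.cases) (blast intro: ext.intros)+
qed

lemma ext_tau_alpha_source:
  assumes "ext_tau \<delta> err I (G, A1) (G', A')" "alpha A A1"
  shows "ext_tau \<delta> err I (G, A) (G', A')"
  using assms ext_alpha[OF _ assms(2) alpha.alpha_refl] by (simp add: ext_tau_def)

lemma ext_tau_star_alpha_source:
  assumes "(ext_tau \<delta> err I)\<^sup>*\<^sup>* (G, A1) (G', A')" "alpha A A1"
  shows "\<exists>A''. (ext_tau \<delta> err I)\<^sup>*\<^sup>* (G, A) (G', A'') \<and> alpha A'' A'"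
  using assms(1)
proof (cases rule: converse_rtranclpE)
  case base
  then show ?thesis using assms(2) by blast
next
  case (step C)
  then have "(ext_tau \<delta> err I)\<^sup>*\<^sup>* (G, A) (G', A')"
    using ext_tau_alpha_source[OF _ assms(2)] by (metis converse_rtranclp_into_rtranclp surj_pair)
  then show ?thesis by (blast intro: alpha.alpha_refl)
qed

lemma ext_tau_star_SPar:
  assumes "(ext_tau \<delta> err I)\<^sup>*\<^sup>* (G, A) (G', A')" "\<forall>c. \<not> rcv_s T c"
  shows "(red_i \<delta> err I)\<^sup>*\<^sup>* (G, SPar A T) (G', SPar A' T)"
  using assms(1)
proof (induction rule: rtranclp_induct2)
  case (step G1 A1 G2 A2)
  have "red_i \<delta> err I (G1, SPar A1 T) (G2, SPar A2 T)"
    using step.hyps(2) unfolding ext_tau_def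
  proof (cases rule: ext.cases)
    case (Shh c v)
    have "trans \<delta> err I G1 T (In c v) T"
      using assms(2) by (intro RcvIgn) (simp add: rcv_conf_def)
    with Shh show ?thesis
      unfolding red_i_def by (intro exI[of _ "Out c v"]) (simp add: Sync1)
  next
    case TauExt
    then show ?thesis
      unfolding red_i_def by (intro exI[of _ TauA]) (simp add: TauPar1)
  qed
  with step.IH show ?case by simp
qed simp

lemma red_i_SPar_cases:
  assumes "red_i \<delta> err I (G, SPar A T) C" "deaf T"
  obtains (left) G' A' T'
      where "C = (G', SPar A' T')" "ext_tau \<delta> err I (G, A) (G', A')" "erase T' = erase T"
    | (right) l G' A' T' where "C = (G', SPar A' T')" "out_or_tau l" "trans \<delta> err I G T l T'"
        "l = TauA \<Longrightarrow> G' = G \<and> alpha A A'"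
proof -
  obtain l where l: "out_or_tau l" "trans \<delta> err I G (SPar A T) l (snd C)" "fst C = upd \<delta> err l G"
    using assms(1) by (auto simp: red_i_def)
  then obtain A' T' where C: "C = (upd \<delta> err l G, SPar A' T')" and step: "par_step G A T l A' T'"
    using trans_SPar_inv by (metis prod.collapse)
  from step l(1) show thesis
  proof (cases rule: par_step.cases)
    case (sync_left c v)
    then have "ext_tau \<delta> err I (G, A) (upd \<delta> err l G, A')"
      using ext.Shh[OF sync_left(2)] by (simp add: ext_tau_def)
    moreover have "erase T' = erase T"
      using alpha_nameless[OF deaf_input_alpha[OF sync_left(3) assms(2)]] by simp
    ultimately show thesis by (rule left[OF C])
  next
    case tau_left
    then have "ext_tau \<delta> err I (G, A) (upd \<delta> err l G, A')"
      by (simp add: ext_tau_def ext.TauExt)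
    moreover have "erase T' = erase T"
      using alpha_nameless[OF tau_left(3)] by simp
    ultimately show thesis by (rule left[OF C])
  next
    case (sync_right c v)
    then show thesis by (intro right[OF C l(1)]) simp_all
  next
    case tau_right
    then show thesis by (intro right[OF C l(1)]) simp_all
  qed simp_all
qed

lemma red_i_star_SPar_quiescent:
  assumes "(red_i \<delta> err I)\<^sup>*\<^sup>* (G, SPar A T) C" "quiescent T"
  shows "\<exists>G' A' T'. C = (G', SPar A' T') \<and> (ext_tau \<delta> err I)\<^sup>*\<^sup>* (G, A) (G', A')
     \<and> erase T' = erase T"
  using assms(1)
proof (induction rule: rtranclp_induct)
  case (step C1 C2)
  then obtain G1 A1 T1 where C1: "C1 = (G1, SPar A1 T1)" "(ext_tau \<delta> err I)\<^sup>*\<^sup>* (G, A) (G1, A1)"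
    and T1: "erase T1 = erase T" by blast
  have "quiescent T1" using assms(2) T1 by (metis quiescent_nameless)
  then have "deaf T1" by (simp add: quiescent_def)
  show ?case
  proof (rule red_i_SPar_cases[OF step.hyps(2)[unfolded C1(1)] \<open>deaf T1\<close>])
    fix G2 A2 T2
    assume "C2 = (G2, SPar A2 T2)" "ext_tau \<delta> err I (G1, A1) (G2, A2)" "erase T2 = erase T1"
    then show ?case using C1(2) T1 by (metis rtranclp.rtrancl_into_rtrancl)
  next
    fix l G2 A2 T2
    assume "out_or_tau l" "trans \<delta> err I G1 T1 l T2"
    then show ?case using \<open>quiescent T1\<close> by (meson inert_not_instantaneous quiescent_def)
  qed
qed blast

lemma quiescent_T_gamma: "quiescent (T_gamma c v eureka fail d arb no u x)"
  by (simp add: quiescent_def T_gamma_eq)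

lemma quiescent_T_gamma_ok: "quiescent (T_gamma_ok eureka d arb u)"
  by (simp add: quiescent_def T_gamma_ok_def)

lemma red_i_star_SPar_T_gamma_rcvd:
  assumes "d \<noteq> eureka" "d \<noteq> fail"
    and "(red_i \<delta> err I)\<^sup>*\<^sup>* (G, SPar A T) (G', SPar A' (T_gamma_ok eureka d arb u))"
    and "erase T = erase (T_gamma_rcvd v eureka fail d arb no u w)"
  shows "w = v \<and> (\<exists>A''. (ext_tau \<delta> err I)\<^sup>*\<^sup>* (G, A) (G', A'') \<and> alpha A'' A')"
  using assms(3,4)
proof (induction "(G, SPar A T)" arbitrary: G A T rule: converse_rtranclp_induct)
  case base
  then show ?case by (simp add: T_gamma_ok_def T_gamma_rcvd_def)
next
  case (step C1)
  have "deaf T" using step.prems by (metis deaf_nameless T_gamma_rcvd_def deaf.simps deaf_p.simps)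
  show ?case
  proof (rule red_i_SPar_cases[OF step.hyps(1) \<open>deaf T\<close>])
    fix G1 A1 T1
    assume C1: "C1 = (G1, SPar A1 T1)" and "ext_tau \<delta> err I (G, A) (G1, A1)" "erase T1 = erase T"
    with step.hyps(3) step.prems show ?thesis by (metis converse_rtranclp_into_rtranclp)
  next
    fix l G1 A1 T1
    assume C1: "C1 = (G1, SPar A1 T1)" and l: "out_or_tau l" "trans \<delta> err I G T l T1"
      and tau: "l = TauA \<Longrightarrow> G1 = G \<and> alpha A A1"
    have T1: "(w = v \<and> l = TauA \<and> erase T1 = erase (T_gamma_ok eureka d arb u))
        \<or> test_failed eureka d arb u T1"
      using T_gamma_rcvd_instantaneous_cases[OF assms(1,2) l(2,1) step.prems] .
    then have "quiescent T1"
      by (metis quiescent_T_gamma_ok quiescent_nameless test_failed_def)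
    from red_i_star_SPar_quiescent[OF step.hyps(2)[unfolded C1] this]
    have run: "(ext_tau \<delta> err I)\<^sup>*\<^sup>* (G1, A1) (G', A')"
      and "erase (T_gamma_ok eureka d arb u) = erase T1"
      by auto
    with T1 have "w = v" "G1 = G" "alpha A A1"
      using tau by (auto simp: test_failed_def)
    with run show ?thesis using ext_tau_star_alpha_source by blast
  qed
qed

lemma trans_T_gamma_deliver:
  assumes "\<Gamma> c = (1, w)" "d \<noteq> c"
  shows "trans \<delta> err I \<Gamma> (T_gamma c v eureka fail d arb no u x) Time
     (T_gamma_rcvd v eureka fail d arb no u w)"
proof -
  have "trans \<delta> err I (\<Gamma>(d := (0, u))) (SRcv c x (check (EVar x) v d fail arb no)) Time
      (SProc (dsubst x w (check (EVar x) v d fail arb no)))"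
    by (rule EndRcv) (use assms in simp)
  then have "trans \<delta> err I (\<Gamma>(d := (0, u))) (SRcv c x (check (EVar x) v d fail arb no)) Time
      (SProc (check (EVal w) v d fail arb no))"
    by simp
  from ResV[OF TimePar[OF this Sleep]] show ?thesis
    by (simp add: T_gamma_eq T_gamma_rcvd_def)
qed

lemma trans_T_gamma_rcvd_accept:
  "trans \<delta> err I \<Gamma> (T_gamma_rcvd v eureka fail d arb no u v) TauA (T_gamma_ok eureka d arb u)"
proof -
  have "trans \<delta> err I (\<Gamma>(d := (0, u))) (SProc (check (EVal v) v d fail arb no)) TauA
      (SProc (PSig (PSnd d (EVal arb) PNil)))"
    by (rule Sum1) (simp_all add: Then)
  from ResV[OF TauPar1[OF this]] show ?thesis
    by (simp add: T_gamma_ok_def T_gamma_rcvd_def)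
qed

lemma weak_ext_alpha:
  assumes "weak_ext \<delta> err I \<Gamma> W a \<Gamma>' W1" "alpha W1 W'" "\<forall>c. a \<noteq> EIota c"
  shows "weak_ext \<delta> err I \<Gamma> W a \<Gamma>' W'"
proof -
  obtain \<Gamma>1 W2 \<Gamma>2 W3 where pre: "(ext_tau \<delta> err I)\<^sup>*\<^sup>* (\<Gamma>, W) (\<Gamma>1, W2)"
    and act: "ext \<delta> err I \<Gamma>1 W2 a \<Gamma>2 W3" and post: "(ext_tau \<delta> err I)\<^sup>*\<^sup>* (\<Gamma>2, W3) (\<Gamma>', W1)"
    using assms(1) unfolding weak_ext_def by blast
  from post consider (base) "(\<Gamma>2, W3) = (\<Gamma>', W1)"
    | (step) C where "(ext_tau \<delta> err I)\<^sup>*\<^sup>* (\<Gamma>2, W3) C" "ext_tau \<delta> err I C (\<Gamma>', W1)"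
    by (metis rtranclp.cases)
  then show ?thesis
  proof cases
    case base
    then have "ext \<delta> err I \<Gamma>1 W2 a \<Gamma>' W'"
      using ext_alpha[OF act alpha.alpha_refl _ assms(3)] assms(2) by simp
    then show ?thesis using pre unfolding weak_ext_def by blast
  next
    case (step C)
    have "ext_tau \<delta> err I C (\<Gamma>', W')"
      using step(2) ext_alpha[OF _ alpha.alpha_refl assms(2)] by (simp add: ext_tau_def)
    with step(1) have "(ext_tau \<delta> err I)\<^sup>*\<^sup>* (\<Gamma>2, W3) (\<Gamma>', W')"
      by (rule rtranclp.rtrancl_into_rtrancl)
    then show ?thesis using pre act unfolding weak_ext_def by blast
  qed
qed

lemma weak_gamma_imp_red_isi_test:
  assumes "d \<noteq> c" "weak_ext \<delta> err I \<Gamma> W (EGamma c v) \<Gamma>' W'"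
  shows "red_isi \<delta> err I (\<Gamma>, SPar W (T_gamma c v eureka fail d arb no u x))
    (\<Gamma>', SPar W' (T_gamma_ok eureka d arb u))"
proof -
  obtain G1 W1 G2 W2 where pre: "(ext_tau \<delta> err I)\<^sup>*\<^sup>* (\<Gamma>, W) (G1, W1)"
    and act: "ext \<delta> err I G1 W1 (EGamma c v) G2 W2"
    and post: "(ext_tau \<delta> err I)\<^sup>*\<^sup>* (G2, W2) (\<Gamma>', W')"
    using assms(2) unfolding weak_ext_def by blast
  from act have G1: "G1 c = (1, v)" and tW: "trans \<delta> err I G1 W1 Time W2"
    and G2: "G2 = upd \<delta> err Time G1"
    by (auto elim: ext.cases)
  have "(red_i \<delta> err I)\<^sup>*\<^sup>* (\<Gamma>, SPar W (T_gamma c v eureka fail d arb no u x))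
      (G1, SPar W1 (T_gamma c v eureka fail d arb no u x))"
    by (rule ext_tau_star_SPar[OF pre]) (simp add: T_gamma_eq)
  moreover have "red_sigma \<delta> err I (G1, SPar W1 (T_gamma c v eureka fail d arb no u x))
      (G2, SPar W2 (T_gamma_rcvd v eureka fail d arb no u v))"
    using TimePar[OF tW trans_T_gamma_deliver[where \<Gamma>=G1, OF G1 assms(1)]] G2
    by (simp add: red_sigma_def)
  moreover have "red_i \<delta> err I (G2, SPar W2 (T_gamma_rcvd v eureka fail d arb no u v))
      (G2, SPar W2 (T_gamma_ok eureka d arb u))"
    unfolding red_i_def using TauPar2[OF trans_T_gamma_rcvd_accept] by (intro exI[of _ TauA]) simp
  moreover have "(red_i \<delta> err I)\<^sup>*\<^sup>* (G2, SPar W2 (T_gamma_ok eureka d arb u))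
      (\<Gamma>', SPar W' (T_gamma_ok eureka d arb u))"
    by (rule ext_tau_star_SPar[OF post]) (simp add: T_gamma_ok_def)
  ultimately show ?thesis
    unfolding red_isi_def by (meson converse_rtranclp_into_rtranclp)
qed

lemma red_isi_test_imp_weak_gamma:
  assumes "d \<noteq> c" "d \<noteq> eureka" "d \<noteq> fail"
    and "red_isi \<delta> err I (\<Gamma>, SPar W (T_gamma c v eureka fail d arb no u x))
      (\<Gamma>', SPar W' (T_gamma_ok eureka d arb u))"
  shows "weak_ext \<delta> err I \<Gamma> W (EGamma c v) \<Gamma>' W'"
proof -
  obtain C1 C2
    where pre: "(red_i \<delta> err I)\<^sup>*\<^sup>* (\<Gamma>, SPar W (T_gamma c v eureka fail d arb no u x)) C1"
      and tick: "red_sigma \<delta> err I C1 C2"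
      and post: "(red_i \<delta> err I)\<^sup>*\<^sup>* C2 (\<Gamma>', SPar W' (T_gamma_ok eureka d arb u))"
    using assms(4) unfolding red_isi_def by blast
  obtain G1 W1 T1 where C1: "C1 = (G1, SPar W1 T1)"
    and pre_W: "(ext_tau \<delta> err I)\<^sup>*\<^sup>* (\<Gamma>, W) (G1, W1)"
    and T1: "erase T1 = erase (T_gamma c v eureka fail d arb no u x)"
    using red_i_star_SPar_quiescent[OF pre quiescent_T_gamma] by blast
  from tick have "trans \<delta> err I G1 (SPar W1 T1) Time (snd C2)" and G2: "fst C2 = upd \<delta> err Time G1"
    by (simp_all add: red_sigma_def C1)
  then obtain W2 T2 where "snd C2 = SPar W2 T2" and step: "par_step G1 W1 T1 Time W2 T2"
    using trans_SPar_inv by blast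
  with G2 have C2: "C2 = (upd \<delta> err Time G1, SPar W2 T2)"
    by (simp add: prod_eq_iff)
  from step have tW: "trans \<delta> err I G1 W1 Time W2" and tT: "trans \<delta> err I G1 T1 Time T2"
    by (auto elim: par_step.cases)
  from T_gamma_Time_cases[OF assms(1-3) tT T1] consider
      (delivered) w
        where "G1 c = (1, w)" "erase T2 = erase (T_gamma_rcvd v eureka fail d arb no u w)"
    | (failed) "test_failed eureka d arb u T2"
    by blast
  then show ?thesis
  proof cases
    case delivered
    obtain A'' where "w = v" and post_W: "(ext_tau \<delta> err I)\<^sup>*\<^sup>* (upd \<delta> err Time G1, W2) (\<Gamma>', A'')"
      and "alpha A'' W'"
      using red_i_star_SPar_T_gamma_rcvd[OF assms(2,3) post[unfolded C2] delivered(2)] by blast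
    have "ext \<delta> err I G1 W1 (EGamma c v) (upd \<delta> err Time G1) W2"
      using Deliver[OF _ tW] delivered(1) \<open>w = v\<close> by simp
    with pre_W post_W have "weak_ext \<delta> err I \<Gamma> W (EGamma c v) \<Gamma>' A''"
      unfolding weak_ext_def by blast
    from this \<open>alpha A'' W'\<close> show ?thesis by (rule weak_ext_alpha) simp
  next
    case failed
    with red_i_star_SPar_quiescent[OF post[unfolded C2]] show ?thesis
      by (auto simp: test_failed_def)
  qed
qed

end

text \<open>Only the distinctness of d is needed: the receiver of the test is already active, the test
  never listens on eureka or fail, and its broadcast on fail makes it fail anyway.\<close>

theorem mainTheorem19:
  fixes \<delta> :: "'a \<Rightarrow> nat" and err :: 'a and I :: "'f \<Rightarrow> 'a list \<Rightarrow> 'a"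
    and \<Gamma> \<Gamma>' :: "('ch::infinite, 'a) env"
    and W W' :: "('ch, 'a, 'f) sys"
    and c eureka fail d :: 'ch
    and v arb no u :: 'a and x :: nat
  assumes delta_pos: "\<forall>w. 1 \<le> \<delta> w"
    and closed: "closed_sys W" and guarded: "guarded_s W"
    and wf: "wf_conf \<Gamma> W"
    and eureka_fresh: "eureka \<notin> fc W" and fail_fresh: "fail \<notin> fc W"
    and eureka_idle: "idle \<Gamma> eureka" and fail_idle: "idle \<Gamma> fail"
    and arb: "\<delta> arb = 1" and no: "\<delta> no = 1"
    and d_ne: "d \<noteq> c" "d \<noteq> eureka" "d \<noteq> fail"
  shows "weak_ext \<delta> err I \<Gamma> W (EGamma c v) \<Gamma>' W' \<longleftrightarrow>
     red_isi \<delta> err I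
       (\<Gamma>, SPar W (T_gamma c v eureka fail d arb no u x))
       (\<Gamma>', SPar W' (T_gamma_ok eureka d arb u))"
  using d_ne by (auto intro: weak_gamma_imp_red_isi_test red_isi_test_imp_weak_gamma)

end
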